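(* Let $(X,d)$ be a complete Busemann convex geodesic metric space which is uniformly convex with a modulus of uniform convexity $\delta_X$ that is monotone or lower semicontinuous from the right. Let $(A,B)$ be a closed convex pair of subsets of $X$ with $B$ bounded, and let $T:A\cup B\to A\cup B$ be a noncyclic relatively nonexpansive mapping. Let $$A_0=\{x\in A : d(x,y')=\operatorname{dist}(A,B)\text{ for some } y'\in B\},$$ let $x_0\in A_0$ and define $x_{n+1}=\tfrac{x_n+Tx_n}{2}$ (the midpoint of $x_n$ and $Tx_n$) for every $n\ge 0$. Then $\lim_{n\to\infty} d(x_n,Tx_n)=0$. Moreover, if $T(A)\subseteq C$ for some compact set $C\subseteq X$, then $\{x_n\}$ converges to a fixed point of $T$.
   Context: $\operatorname{dist}(A,B)=\inf\{d(x,y):x\in A,y\in B\}$. A geodesic space is one in which any two points are joined by a geodesic segment; a subset is convex if it contains every geodesic segment joining two of its points. $X$ is Busemann convex if for any geodesics $c_1:[0,l_1]\to X$, $c_2:[0,l_2]\to X$, $d(c_1(tl_1),c_2(tl_2))\le (1-t)d(c_1(0),c_2(0))+t\,d(c_1(l_1),c_2(l_2))$ for all $t\in[0,1]$; such spaces are uniquely geodesic, so the midpoint $\tfrac{x+y}{2}$ (the point $m$ with $d(x,m)=d(m,y)=d(x,y)/2$) is unique. $X$ is uniformly convex if for every $r>0$ and $\varepsilon\in(0,2]$ there is $\delta\in(0,1]$ such that for all $a,x,y$ with $d(x,a)\le r$, $d(y,a)\le r$, $d(x,y)\ge\varepsilon r$, the midpoint $m$ of $x,y$ satisfies $d(m,a)\le(1-\delta)r$;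 a function $\delta_X(r,\varepsilon)$ providing such $\delta$ is a modulus of uniform convexity; it is monotone if it is decreasing in $r$ for each fixed $\varepsilon$, and lower semicontinuous from the right if it is lower semicontinuous from the right in $r$ for each fixed $\varepsilon$. $T$ is relatively nonexpansive if $d(Tx,Ty)\le d(x,y)$ for all $x\in A$, $y\in B$, and noncyclic if $T(A)\subseteq A$, $T(B)\subseteq B$. *)

theory Defs
  imports "HOL-Analysis.Analysis"
begin

definition is_geodesic :: "(real \<Rightarrow> 'a::metric_space) \<Rightarrow> real \<Rightarrow> bool" where
  "is_geodesic c l \<longleftrightarrow> 0 \<le> l \<and>
     (\<forall>s\<in>{0..l}. \<forall>t\<in>{0..l}. dist (c s) (c t) = \<bar>s - t\<bar>)"

definition geodesic_joining :: "(real \<Rightarrow> 'a::metric_space) \<Rightarrow> real \<Rightarrow> 'a \<Rightarrow> 'a \<Rightarrow> bool" where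
  "geodesic_joining c l x y \<longleftrightarrow> is_geodesic c l \<and> c 0 = x \<and> c l = y"

definition geodesic_space :: "'a::metric_space itself \<Rightarrow> bool" where
  "geodesic_space _ \<longleftrightarrow> (\<forall>x y::'a. \<exists>c l. geodesic_joining c l x y)"

definition geod_convex :: "'a::metric_space set \<Rightarrow> bool" where
  "geod_convex S \<longleftrightarrow> (\<forall>x\<in>S. \<forall>y\<in>S. \<forall>c l. geodesic_joining c l x y \<longrightarrow> c ` {0..l} \<subseteq> S)"

definition busemann_convex :: "'a::metric_space itself \<Rightarrow> bool" where
  "busemann_convex _ \<longleftrightarrow>
     (\<forall>(c1::real \<Rightarrow> 'a) l1 (c2::real \<Rightarrow> 'a) l2. is_geodesic c1 l1 \<longrightarrow> is_geodesic c2 l2 \<longrightarrow>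
        (\<forall>t\<in>{0..1}. dist (c1 (t * l1)) (c2 (t * l2))
            \<le> (1 - t) * dist (c1 0) (c2 0) + t * dist (c1 l1) (c2 l2)))"

text \<open>The (unique, in a Busemann convex geodesic space) midpoint of x and y.\<close>
definition gmid :: "'a::metric_space \<Rightarrow> 'a \<Rightarrow> 'a" where
  "gmid x y = (THE m. dist x m = dist x y / 2 \<and> dist m y = dist x y / 2)"

definition modulus_uc :: "'a::metric_space itself \<Rightarrow> (real \<Rightarrow> real \<Rightarrow> real) \<Rightarrow> bool" where
  "modulus_uc _ \<delta> \<longleftrightarrow>
     (\<forall>r>0. \<forall>\<epsilon>\<in>{0<..2}. 0 < \<delta> r \<epsilon> \<and> \<delta> r \<epsilon> \<le> 1 \<and>
        (\<forall>a x y::'a. dist x a \<le> r \<longrightarrow> dist y a \<le> r \<longrightarrow> dist x y \<ge> \<epsilon> * r \<longrightarrow>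
           dist (gmid x y) a \<le> (1 - \<delta> r \<epsilon>) * r))"

definition modulus_monotone :: "(real \<Rightarrow> real \<Rightarrow> real) \<Rightarrow> bool" where
  "modulus_monotone \<delta> \<longleftrightarrow>
     (\<forall>\<epsilon>\<in>{0<..2}. \<forall>r1 r2. 0 < r1 \<longrightarrow> r1 \<le> r2 \<longrightarrow> \<delta> r2 \<epsilon> \<le> \<delta> r1 \<epsilon>)"

definition modulus_lsc_right :: "(real \<Rightarrow> real \<Rightarrow> real) \<Rightarrow> bool" where
  "modulus_lsc_right \<delta> \<longleftrightarrow>
     (\<forall>\<epsilon>\<in>{0<..2}. \<forall>r>0. \<forall>e>0. \<exists>\<eta>>0. \<forall>s. r \<le> s \<and> s < r + \<eta> \<longrightarrow> \<delta> r \<epsilon> - e < \<delta> s \<epsilon>)"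

definition rel_nonexpansive :: "('a::metric_space \<Rightarrow> 'a) \<Rightarrow> 'a set \<Rightarrow> 'a set \<Rightarrow> bool" where
  "rel_nonexpansive T A B \<longleftrightarrow> (\<forall>x\<in>A. \<forall>y\<in>B. dist (T x) (T y) \<le> dist x y)"

definition noncyclic :: "('a \<Rightarrow> 'a) \<Rightarrow> 'a set \<Rightarrow> 'a set \<Rightarrow> bool" where
  "noncyclic T A B \<longleftrightarrow> T ` A \<subseteq> A \<and> T ` B \<subseteq> B"

definition proximal_part :: "'a::metric_space set \<Rightarrow> 'a set \<Rightarrow> 'a set" where
  "proximal_part A B = {x\<in>A. \<exists>y\<in>B. dist x y = setdist A B}"

end

theory Submission
  imports Defs
begin

text \<open>
  The key object is the asymptotic radius R z = limsup dist (x n) z of the (bounded) iteration.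
  Uniform convexity of the distance functions passes to R, so R has a unique minimiser q on the
  closed convex set B, its asymptotic centre. Since x (Suc n) is the midpoint of x n and T (x n)
  and T is nonexpansive between A and B, R (T q) \<le> R q, whence T q = q. Then dist (x n) q
  decreases, and as the midpoint of x n and T (x n) stays at the same limiting distance from q,
  uniform convexity forces dist (x n) (T (x n)) \<rightarrow> 0.

  If T(A) is relatively compact, a subsequence of x converges to some p \<in> A. The point q of B
  nearest to p is at distance dist(A,B) from p, is fixed by T, and p is then the unique point of
  A nearest to q, hence fixed as well; a second uniform convexity argument with the decreasing
  distances dist (x n) q upgrades subsequential convergence to convergence of x.
\<close>

lemma is_geodesic_dist_ends: "is_geodesic c l \<Longrightarrow> dist (c 0) (c l) = l"
  unfolding is_geodesic_def by auto

lemma is_geodesic_append: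
  assumes g1: "is_geodesic c1 l1" and g2: "is_geodesic c2 l2" and e: "c1 l1 = c2 0"
    and d: "dist (c1 0) (c2 l2) = l1 + l2"
  shows "is_geodesic (\<lambda>s. if s \<le> l1 then c1 s else c2 (s - l1)) (l1 + l2)"
proof -
  have l1: "0 \<le> l1" and l2: "0 \<le> l2" using g1 g2 by (auto simp: is_geodesic_def)
  have G1: "\<And>s t. s\<in>{0..l1} \<Longrightarrow> t\<in>{0..l1} \<Longrightarrow> dist (c1 s) (c1 t) = \<bar>s - t\<bar>"
    using g1 by (auto simp: is_geodesic_def)
  have G2: "\<And>s t. s\<in>{0..l2} \<Longrightarrow> t\<in>{0..l2} \<Longrightarrow> dist (c2 s) (c2 t) = \<bar>s - t\<bar>"
    using g2 by (auto simp: is_geodesic_def)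
  have mixed: "dist (c1 s) (c2 (t - l1)) = t - s"
    if "0 \<le> s" "s \<le> l1" "l1 < t" "t \<le> l1 + l2" for s t
  proof (rule antisym)
    have "dist (c1 s) (c2 (t - l1)) \<le> dist (c1 s) (c1 l1) + dist (c2 0) (c2 (t - l1))"
      using dist_triangle[of "c1 s" "c2 (t - l1)" "c1 l1"] e by simp
    also have "\<dots> = (l1 - s) + (t - l1)" using G1[of s l1] G2[of 0 "t - l1"] that l1 by auto
    finally show "dist (c1 s) (c2 (t - l1)) \<le> t - s" by simp
  next
    have "l1 + l2 \<le> dist (c1 0) (c1 s) + dist (c1 s) (c2 (t - l1)) + dist (c2 (t - l1)) (c2 l2)"
      using d dist_triangle[of "c1 0" "c2 l2" "c1 s"] dist_triangle[of "c1 s" "c2 l2" "c2 (t - l1)"]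
      by linarith
    also have "\<dots> = s + dist (c1 s) (c2 (t - l1)) + (l2 - (t - l1))"
      using G1[of 0 s] G2[of "t - l1" l2] that l1 by auto
    finally show "t - s \<le> dist (c1 s) (c2 (t - l1))" by simp
  qed
  show ?thesis unfolding is_geodesic_def
  proof (intro conjI ballI)
    show "0 \<le> l1 + l2" using l1 l2 by simp
  next
    fix s t assume s: "s \<in> {0..l1+l2}" and t: "t \<in> {0..l1+l2}"
    show "dist (if s \<le> l1 then c1 s else c2 (s - l1)) (if t \<le> l1 then c1 t else c2 (t - l1))
          = \<bar>s - t\<bar>"
    proof (cases "s \<le> l1"; cases "t \<le> l1")
      assume "s \<le> l1" "t \<le> l1" then show ?thesis using G1[of s t] s t by auto
    next
      assume "s \<le> l1" "\<not> t \<le> l1" then show ?thesis using mixed[of s t] s t by auto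
    next
      assume "\<not> s \<le> l1" "t \<le> l1" then show ?thesis
        using mixed[of t s] s t by (auto simp: dist_commute)
    next
      assume "\<not> s \<le> l1" "\<not> t \<le> l1" then show ?thesis
        using G2[of "s - l1" "t - l1"] s t by auto
    qed
  qed
qed

lemma busemann_convex_midpoints:
  assumes "busemann_convex TYPE('a::metric_space)"
    and "is_geodesic (c1::real \<Rightarrow> 'a) l1" and "is_geodesic c2 l2"
  shows "dist (c1 (l1/2)) (c2 (l2/2)) \<le> (dist (c1 0) (c2 0) + dist (c1 l1) (c2 l2)) / 2"
proof -
  have "\<forall>t\<in>{0..1}. dist (c1 (t * l1)) (c2 (t * l2))
          \<le> (1 - t) * dist (c1 0) (c2 0) + t * dist (c1 l1) (c2 l2)"
    using assms unfolding busemann_convex_def by blast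
  then have "dist (c1 ((1/2) * l1)) (c2 ((1/2) * l2))
        \<le> (1 - 1/2) * dist (c1 0) (c2 0) + (1/2) * dist (c1 l1) (c2 l2)"
    by (rule bspec) simp
  then show ?thesis by (simp add: field_simps)
qed

lemma geodesic_joining_exists:
  assumes "geodesic_space TYPE('a::metric_space)"
  obtains c l where "geodesic_joining (c::real \<Rightarrow> 'a) l a b"
  using assms unfolding geodesic_space_def by blast

lemma gmid_eq_geodesic_midpoint:
  assumes gs: "geodesic_space TYPE('a::metric_space)" and bc: "busemann_convex TYPE('a)"
    and gj: "geodesic_joining (c::real \<Rightarrow> 'a) l a b"
  shows "gmid a b = c (l/2)"
proof -
  have g: "is_geodesic c l" and c0: "c 0 = a" and cl: "c l = b"
    using gj by (auto simp: geodesic_joining_def)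
  have l: "l = dist a b" using is_geodesic_dist_ends[OF g] c0 cl by simp
  have l0: "0 \<le> l" using g by (auto simp: is_geodesic_def)
  have G: "\<And>s t. s\<in>{0..l} \<Longrightarrow> t\<in>{0..l} \<Longrightarrow> dist (c s) (c t) = \<bar>s - t\<bar>"
    using g by (auto simp: is_geodesic_def)
  show ?thesis unfolding gmid_def
  proof (rule the_equality)
    show "dist a (c (l/2)) = dist a b / 2 \<and> dist (c (l/2)) b = dist a b / 2"
      using G[of 0 "l/2"] G[of "l/2" l] l0 c0 cl l by auto
  next
    fix m assume m: "dist a m = dist a b / 2 \<and> dist m b = dist a b / 2"
    obtain g1 k1 where j1: "geodesic_joining (g1::real \<Rightarrow> 'a) k1 a m"
      using geodesic_joining_exists[OF gs] .
    obtain g2 k2 where j2: "geodesic_joining (g2::real \<Rightarrow> 'a) k2 m b"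
      using geodesic_joining_exists[OF gs] .
    have gg1: "is_geodesic g1 k1" "g1 0 = a" "g1 k1 = m"
      and gg2: "is_geodesic g2 k2" "g2 0 = m" "g2 k2 = b"
      using j1 j2 by (auto simp: geodesic_joining_def)
    have k1: "k1 = l/2" using is_geodesic_dist_ends[OF gg1(1)] gg1 m l by simp
    have k2: "k2 = l/2" using is_geodesic_dist_ends[OF gg2(1)] gg2 m l by simp
    define c' where "c' = (\<lambda>s. if s \<le> k1 then g1 s else g2 (s - k1))"
    \<comment> \<open>a second geodesic from a to b, through m; Busemann convexity forces the two to agree\<close>
    have "is_geodesic c' (k1 + k2)" unfolding c'_def
    proof (rule is_geodesic_append[OF gg1(1) gg2(1)])
      show "g1 k1 = g2 0" using gg1 gg2 by simp
      have "dist (g1 0) (g2 k2) = dist a b" using gg1(2) gg2(3) by simp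
      then show "dist (g1 0) (g2 k2) = k1 + k2" using k1 k2 l by linarith
    qed
    then have "is_geodesic c' l" using k1 k2 by simp
    then have "dist (c (l/2)) (c' (l/2)) \<le> (dist (c 0) (c' 0) + dist (c l) (c' l)) / 2"
      using busemann_convex_midpoints[OF bc g] by blast
    moreover have "c' 0 = a" "c' (l/2) = m" using gg1 k1 l0 by (simp_all add: c'_def)
    moreover have "c' l = b"
    proof (cases "l \<le> k1")
      case True
      then have "l = 0" using k1 l0 by simp
      then show ?thesis using gg1 k1 l by (simp add: c'_def)
    next
      case False
      have "l - k1 = k2" using k1 k2 by simp
      then show ?thesis using False gg2 by (simp add: c'_def)
    qed
    ultimately show "m = c (l/2)" using c0 cl by simp
  qed
qed

lemma gmid_in_geod_convex:
  assumes gs: "geodesic_space TYPE('a::metric_space)" and bc: "busemann_convex TYPE('a)"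
    and S: "geod_convex S" and "a \<in> S" and "(b::'a) \<in> S"
  shows "gmid a b \<in> S"
proof -
  obtain c l where gj: "geodesic_joining (c::real \<Rightarrow> 'a) l a b"
    using geodesic_joining_exists[OF gs] .
  have "c ` {0..l} \<subseteq> S" using S assms(4,5) gj unfolding geod_convex_def by blast
  moreover have "l/2 \<in> {0..l}" using gj by (simp add: is_geodesic_def geodesic_joining_def)
  ultimately show ?thesis unfolding gmid_eq_geodesic_midpoint[OF gs bc gj] by blast
qed

lemma dist_gmid_gmid_le:
  assumes gs: "geodesic_space TYPE('a::metric_space)" and bc: "busemann_convex TYPE('a)"
  shows "dist (gmid a b) (gmid a' (b'::'a)) \<le> (dist a a' + dist b b') / 2"
proof -
  obtain c l where gj: "geodesic_joining (c::real \<Rightarrow> 'a) l a b"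
    using geodesic_joining_exists[OF gs] .
  obtain c' l' where gj': "geodesic_joining (c'::real \<Rightarrow> 'a) l' a' b'"
    using geodesic_joining_exists[OF gs] .
  have g: "is_geodesic c l" and c0: "c 0 = a" and cl: "c l = b"
    using gj by (auto simp: geodesic_joining_def)
  have g': "is_geodesic c' l'" and c0': "c' 0 = a'" and cl': "c' l' = b'"
    using gj' by (auto simp: geodesic_joining_def)
  have "dist (c (l/2)) (c' (l'/2)) \<le> (dist (c 0) (c' 0) + dist (c l) (c' l')) / 2"
    by (rule busemann_convex_midpoints[OF bc g g'])
  then show ?thesis
    using gmid_eq_geodesic_midpoint[OF gs bc gj] gmid_eq_geodesic_midpoint[OF gs bc gj'] c0 cl c0' cl'
    by simp
qed

lemma gmid_idem: "gmid w w = w"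
proof -
  have "(\<lambda>m. dist w m = dist w w / 2 \<and> dist m w = dist w w / 2) = (\<lambda>m. m = w)"
    by (auto simp: fun_eq_iff)
  then show ?thesis unfolding gmid_def by simp
qed

lemma dist_gmid_le:
  assumes "geodesic_space TYPE('a::metric_space)" and "busemann_convex TYPE('a)"
  shows "dist (gmid u v) (w::'a) \<le> (dist u w + dist v w) / 2"
  using dist_gmid_gmid_le[OF assms, of u v w w] by (simp add: gmid_idem)

text \<open>This is the only use of the regularity (monotonicity or semicontinuity) of the modulus.\<close>
lemma modulus_locally_bounded_below:
  assumes uc: "modulus_uc TYPE('a::metric_space) \<delta>"
    and reg: "modulus_monotone \<delta> \<or> modulus_lsc_right \<delta>"
    and r: "r > 0" and e: "e \<in> {0<..2}"
  obtains \<eta> k where "0 < \<eta>" "\<eta> \<le> 1" "0 < k" "\<And>s. r \<le> s \<Longrightarrow> s < r + \<eta> \<Longrightarrow> k \<le> \<delta> s e"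
proof (cases "modulus_monotone \<delta>")
  case True
  have "\<delta> (r + 1) e \<le> \<delta> s e" if "r \<le> s" "s < r + 1" for s
    using True e that r unfolding modulus_monotone_def by auto
  moreover have "0 < \<delta> (r + 1) e" using uc e r unfolding modulus_uc_def by auto
  ultimately show ?thesis using that[of 1 "\<delta> (r + 1) e"] by auto
next
  case False
  then have "modulus_lsc_right \<delta>" using reg by blast
  moreover have dpos: "0 < \<delta> r e" using uc e r unfolding modulus_uc_def by auto
  ultimately obtain \<eta> where \<eta>: "\<eta> > 0" "\<And>s. r \<le> s \<and> s < r + \<eta> \<Longrightarrow> \<delta> r e - \<delta> r e / 2 < \<delta> s e"
    using e r unfolding modulus_lsc_right_def by (meson half_gt_zero)
  show ?thesis
    by (rule that[of "min \<eta> 1" "\<delta> r e / 2"]) (use \<eta> dpos in \<open>auto intro: less_imp_le\<close>)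
qed

text \<open>The decrease c is uniform in the centre and in radii slightly above r; this is the form of
  uniform convexity that passes to asymptotic radii.\<close>
lemma modulus_uc_uniform_decrease:
  assumes uc: "modulus_uc TYPE('a::metric_space) \<delta>"
    and reg: "modulus_monotone \<delta> \<or> modulus_lsc_right \<delta>"
    and r: "r > 0" and \<epsilon>: "\<epsilon> > 0"
  obtains \<eta> c where "\<eta> > 0" "c > 0"
    "\<And>(a::'a) u v s. r \<le> s \<Longrightarrow> s < r + \<eta> \<Longrightarrow> dist u a \<le> s \<Longrightarrow> dist v a \<le> s
       \<Longrightarrow> \<epsilon> \<le> dist u v \<Longrightarrow> dist (gmid u v) a \<le> s - c"
proof -
  define e where "e = min 2 (\<epsilon> / (r + 1))"
  have e02: "e \<in> {0<..2}" using r \<epsilon> by (auto simp: e_def)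
  obtain \<eta> k where \<eta>: "\<eta> > 0" "\<eta> \<le> 1" and k: "k > 0"
    and dk: "\<And>s. r \<le> s \<Longrightarrow> s < r + \<eta> \<Longrightarrow> k \<le> \<delta> s e"
    using modulus_locally_bounded_below[OF uc reg r e02] by blast
  have "dist (gmid u v) a \<le> s - k * r"
    if rs: "r \<le> s" "s < r + \<eta>" and du: "dist u a \<le> s" and dv: "dist v a \<le> s"
      and uv: "\<epsilon> \<le> dist u v" for a u v :: 'a and s
  proof -
    have s0: "s > 0" using rs r by simp
    have "e * s \<le> (\<epsilon> / (r + 1)) * (r + 1)"
      using rs \<eta> s0 r \<epsilon> by (intro mult_mono) (auto simp: e_def)
    then have "e * s \<le> dist u v" using r uv by simp
    then have "dist (gmid u v) a \<le> (1 - \<delta> s e) * s"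
      using uc e02 s0 du dv unfolding modulus_uc_def by blast
    also have "\<dots> \<le> s - k * r"
      using dk[OF rs] k r rs mult_mono[of k "\<delta> s e" r s] by (simp add: algebra_simps)
    finally show ?thesis .
  qed
  then show ?thesis using that[of \<eta> "k * r"] \<eta> k r by simp
qed

lemma modulus_uc_dist_gmid_less:
  assumes uc: "modulus_uc TYPE('a::metric_space) \<delta>" and r: "r > 0"
    and du: "dist u a \<le> r" and dv: "dist v a \<le> r" and ne: "u \<noteq> (v::'a)"
  shows "dist (gmid u v) a < r"
proof -
  define e where "e = min 2 (dist u v / r)"
  have e: "e \<in> {0<..2}" using ne r by (auto simp: e_def)
  have "e * r \<le> dist u v" using r by (auto simp: e_def min_def field_simps)
  then have "dist (gmid u v) a \<le> (1 - \<delta> r e) * r" and "0 < \<delta> r e"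
    using uc e r du dv unfolding modulus_uc_def by blast+
  moreover have "0 < \<delta> r e * r" using \<open>0 < \<delta> r e\<close> r by simp
  ultimately show ?thesis by (simp add: algebra_simps)
qed

lemma geod_convex_nearest_unique:
  assumes gs: "geodesic_space TYPE('a::metric_space)" and bc: "busemann_convex TYPE('a)"
    and uc: "modulus_uc TYPE('a) \<delta>"
    and S: "geod_convex S" and u: "u \<in> S" and v: "v \<in> S" and low: "\<forall>w\<in>S. D \<le> dist w a"
    and du: "dist u a \<le> D" and dv: "dist v a \<le> D"
  shows "u = (v::'a)"
proof (rule ccontr)
  assume "u \<noteq> v"
  then have "D \<noteq> 0" using du dv by auto
  then have "D > 0" using du zero_le_dist[of u a] by linarith
  then have "dist (gmid u v) a < D" using modulus_uc_dist_gmid_less[OF uc _ du dv] \<open>u \<noteq> v\<close> by blast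
  moreover have "gmid u v \<in> S" using gmid_in_geod_convex[OF gs bc S u v] .
  ultimately show False using low by fastforce
qed

lemma modulus_uc_dist_tendsto_0:
  assumes uc: "modulus_uc TYPE('a::metric_space) \<delta>"
    and reg: "modulus_monotone \<delta> \<or> modulus_lsc_right \<delta>"
    and rL: "r \<longlonglongrightarrow> L" and Lr: "\<And>n. L \<le> r n"
    and du: "\<And>n. dist (u n) a \<le> r n" and dv: "\<And>n. dist (v n) (a::'a) \<le> r n"
    and g: "(\<lambda>n. dist (gmid (u n) (v n)) a) \<longlonglongrightarrow> L"
  shows "(\<lambda>n. dist (u n) (v n)) \<longlonglongrightarrow> 0"
proof -
  have L0: "0 \<le> L" by (rule LIMSEQ_le_const[OF g]) simp
  show ?thesis
  proof (cases "L = 0")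
    case True
    show ?thesis
    proof (rule tendsto_sandwich[of "\<lambda>n. 0" _ _ "\<lambda>n. 2 * r n"])
      show "\<forall>\<^sub>F n in sequentially. dist (u n) (v n) \<le> 2 * r n"
        using dist_triangle2[of "u _" "v _" a] du dv by (intro always_eventually allI) (smt (verit))
      show "(\<lambda>n. 2 * r n) \<longlonglongrightarrow> 0" using tendsto_mult_left[OF rL, of 2] True by simp
    qed simp_all
  next
    case False
    then have Lp: "L > 0" using L0 by simp
    show ?thesis unfolding tendsto_iff
    proof (intro allI impI)
      fix \<epsilon> :: real assume "\<epsilon> > 0"
      obtain \<eta> c where \<eta>: "\<eta> > 0" and c: "c > 0"
        and H: "\<And>(a::'a) u v s. L \<le> s \<Longrightarrow> s < L + \<eta> \<Longrightarrow> dist u a \<le> s \<Longrightarrow> dist v a \<le> s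
                 \<Longrightarrow> \<epsilon> \<le> dist u v \<Longrightarrow> dist (gmid u v) a \<le> s - c"
        using modulus_uc_uniform_decrease[OF uc reg Lp \<open>\<epsilon> > 0\<close>] by blast
      have "\<forall>\<^sub>F n in sequentially. dist (r n) L < \<eta>" using rL \<eta> unfolding tendsto_iff by blast
      moreover have "(\<lambda>n. r n - dist (gmid (u n) (v n)) a) \<longlonglongrightarrow> L - L"
        by (intro tendsto_intros rL g)
      then have "\<forall>\<^sub>F n in sequentially. dist (r n - dist (gmid (u n) (v n)) a) 0 < c"
        using c unfolding tendsto_iff by simp
      ultimately show "\<forall>\<^sub>F n in sequentially. dist (dist (u n) (v n)) 0 < \<epsilon>"
      proof eventually_elim
        case (elim n)
        \<comment> \<open>otherwise the midpoint would lie deeper than r n - c\<close>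
        have "\<not> \<epsilon> \<le> dist (u n) (v n)"
        proof
          assume "\<epsilon> \<le> dist (u n) (v n)"
          moreover have "r n < L + \<eta>" using elim(1) by (simp add: dist_real_def)
          ultimately have "dist (gmid (u n) (v n)) a \<le> r n - c" using H Lr du dv by blast
          then show False using elim(2) by (simp add: dist_real_def)
        qed
        then show ?case by simp
      qed
    qed
  qed
qed

definition uniformly_convex_on :: "'a::metric_space set \<Rightarrow> ('a \<Rightarrow> real) \<Rightarrow> bool" where
  "uniformly_convex_on S F \<longleftrightarrow>
     (\<forall>r>0. \<forall>\<epsilon>>0. \<exists>\<eta>>0. \<exists>c>0. \<forall>z\<in>S. \<forall>z'\<in>S. \<forall>s. r \<le> s \<longrightarrow> s < r + \<eta> \<longrightarrow>
        F z \<le> s \<longrightarrow> F z' \<le> s \<longrightarrow> \<epsilon> \<le> dist z z' \<longrightarrow> F (gmid z z') \<le> s - c)"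

lemma uniformly_convex_onD:
  assumes "uniformly_convex_on S F" and "r > 0" and "\<epsilon> > 0"
  obtains \<eta> c where "\<eta> > 0" "c > 0"
    "\<And>z z' s. z \<in> S \<Longrightarrow> z' \<in> S \<Longrightarrow> r \<le> s \<Longrightarrow> s < r + \<eta> \<Longrightarrow> F z \<le> s \<Longrightarrow> F z' \<le> s
       \<Longrightarrow> \<epsilon> \<le> dist z z' \<Longrightarrow> F (gmid z z') \<le> s - c"
  using assms(1)[unfolded uniformly_convex_on_def, rule_format, OF assms(2,3)] that by blast


lemma uniformly_convex_on_dist:
  assumes "modulus_uc TYPE('a::metric_space) \<delta>" and "modulus_monotone \<delta> \<or> modulus_lsc_right \<delta>"
  shows "uniformly_convex_on S (\<lambda>z. dist z (a::'a))"
  unfolding uniformly_convex_on_def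
proof (intro allI impI)
  fix r \<epsilon> :: real assume r: "r > 0" and \<epsilon>: "\<epsilon> > 0"
  obtain \<eta> c where "\<eta> > 0" "c > 0"
    and "\<And>(b::'a) u v s. r \<le> s \<Longrightarrow> s < r + \<eta> \<Longrightarrow> dist u b \<le> s \<Longrightarrow> dist v b \<le> s
           \<Longrightarrow> \<epsilon> \<le> dist u v \<Longrightarrow> dist (gmid u v) b \<le> s - c"
    using modulus_uc_uniform_decrease[OF assms r \<epsilon>] by blast
  then show "\<exists>\<eta>>0. \<exists>c>0. \<forall>z\<in>S. \<forall>z'\<in>S. \<forall>s. r \<le> s \<longrightarrow> s < r + \<eta> \<longrightarrow> dist z a \<le> s \<longrightarrow>
      dist z' a \<le> s \<longrightarrow> \<epsilon> \<le> dist z z' \<longrightarrow> dist (gmid z z') a \<le> s - c"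
    by blast
qed

lemma uniformly_convex_on_near_inf_close:
  assumes gs: "geodesic_space TYPE('a::metric_space)" and bc: "busemann_convex TYPE('a)"
    and cv: "geod_convex (B::'a set)" and uc: "uniformly_convex_on B F"
    and low: "\<And>z. z \<in> B \<Longrightarrow> \<rho> \<le> F z" and \<rho>0: "0 \<le> \<rho>"
    and tri: "\<And>z z'. z \<in> B \<Longrightarrow> z' \<in> B \<Longrightarrow> dist z z' \<le> F z + F z'"
    and \<epsilon>: "\<epsilon> > 0"
  shows "\<exists>\<eta>>0. \<forall>z\<in>B. \<forall>z'\<in>B. F z < \<rho> + \<eta> \<longrightarrow> F z' < \<rho> + \<eta> \<longrightarrow> dist z z' < (\<epsilon>::real)"
proof (cases "\<rho> = 0")
  case True
  show ?thesis
  proof (intro exI[of _ "\<epsilon>/2"] conjI ballI impI)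
    fix z z' assume "z \<in> B" "z' \<in> B" "F z < \<rho> + \<epsilon>/2" "F z' < \<rho> + \<epsilon>/2"
    then show "dist z z' < \<epsilon>" using tri[of z z'] True by linarith
  qed (use \<epsilon> in simp)
next
  case False
  then have "\<rho> > 0" using \<rho>0 by simp
  then obtain \<eta> c where \<eta>: "\<eta> > 0" and c: "c > 0"
    and H: "\<And>z z' s. z \<in> B \<Longrightarrow> z' \<in> B \<Longrightarrow> \<rho> \<le> s \<Longrightarrow> s < \<rho> + \<eta> \<Longrightarrow> F z \<le> s
              \<Longrightarrow> F z' \<le> s \<Longrightarrow> \<epsilon> \<le> dist z z' \<Longrightarrow> F (gmid z z') \<le> s - c"
    using uniformly_convex_onD[OF uc _ \<epsilon>] by blast
  show ?thesis
  proof (intro exI[of _ "min \<eta> c"] conjI ballI impI)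
    fix z z' assume z: "z \<in> B" and z': "z' \<in> B"
      and Fz: "F z < \<rho> + min \<eta> c" and Fz': "F z' < \<rho> + min \<eta> c"
    show "dist z z' < \<epsilon>"
    proof (rule ccontr)
      assume "\<not> dist z z' < \<epsilon>"
      define s where "s = max (F z) (F z')"
      \<comment> \<open>the midpoint would lie below the infimum\<close>
      have "\<rho> \<le> s" "s < \<rho> + \<eta>" "F z \<le> s" "F z' \<le> s" "s - c < \<rho>"
        using low[OF z] Fz Fz' by (auto simp: s_def)
      then have "F (gmid z z') \<le> s - c"
        using H[OF z z'] \<open>\<not> dist z z' < \<epsilon>\<close> by simp
      moreover note \<open>s - c < \<rho>\<close>
      moreover have "\<rho> \<le> F (gmid z z')" using low gmid_in_geod_convex[OF gs bc cv z z'] by blast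
      ultimately show False by linarith
    qed
  qed (use \<eta> c in simp)
qed

lemma uniformly_convex_on_unique_minimizer:
  assumes gs: "geodesic_space TYPE('a::complete_space)" and bc: "busemann_convex TYPE('a)"
    and cl: "closed B" and cv: "geod_convex B" and ne: "B \<noteq> {}"
    and nonneg: "\<And>z. z \<in> B \<Longrightarrow> 0 \<le> F z"
    and lip: "\<And>z z'. z \<in> B \<Longrightarrow> z' \<in> B \<Longrightarrow> F z \<le> F z' + dist z z'"
    and tri: "\<And>z z'. z \<in> B \<Longrightarrow> z' \<in> B \<Longrightarrow> dist z z' \<le> F z + F z'"
    and uc: "uniformly_convex_on B F"
  shows "\<exists>q\<in>B. (\<forall>z\<in>B. F q \<le> F z) \<and> (\<forall>z\<in>B. F z \<le> F q \<longrightarrow> z = (q::'a))"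
proof -
  define \<rho> where "\<rho> = Inf (F ` B)"
  have bdd: "bdd_below (F ` B)" using nonneg by (meson bdd_belowI2)
  have low: "\<And>z. z \<in> B \<Longrightarrow> \<rho> \<le> F z" unfolding \<rho>_def using bdd by (auto intro: cInf_lower)
  have \<rho>0: "0 \<le> \<rho>" unfolding \<rho>_def using ne nonneg by (auto intro: cInf_greatest)
  note close = uniformly_convex_on_near_inf_close[OF gs bc cv uc low \<rho>0 tri]
  have "\<exists>z. z \<in> B \<and> F z < \<rho> + inverse (real (Suc k))" for k
  proof -
    have "Inf (F ` B) < \<rho> + inverse (real (Suc k))" by (simp add: \<rho>_def)
    then show ?thesis using cInf_less_iff[OF _ bdd] ne by auto
  qed
  then have "\<exists>zs. \<forall>k. zs k \<in> B \<and> F (zs k) < \<rho> + inverse (real (Suc k))" by (rule choice[OF allI])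
  then obtain zs where zsB: "\<And>k. zs k \<in> B" and zsF: "\<And>k. F (zs k) < \<rho> + inverse (real (Suc k))"
    by blast
  have Fzs: "(\<lambda>k. F (zs k)) \<longlonglongrightarrow> \<rho>"
  proof (rule tendsto_sandwich[of "\<lambda>k. \<rho>" _ _ "\<lambda>k. \<rho> + inverse (real (Suc k))"])
    show "(\<lambda>k. \<rho> + inverse (real (Suc k))) \<longlonglongrightarrow> \<rho>"
      using tendsto_add[OF tendsto_const LIMSEQ_inverse_real_of_nat, of \<rho>] by simp
    show "\<forall>\<^sub>F k in sequentially. F (zs k) \<le> \<rho> + inverse (real (Suc k))"
      by (intro always_eventually allI less_imp_le zsF)
  qed (use low zsB in auto)
  have "Cauchy zs"
  proof (rule metric_CauchyI)
    fix \<epsilon> :: real assume "0 < \<epsilon>"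
    then obtain \<eta> where \<eta>: "\<eta> > 0"
      and H: "\<forall>z\<in>B. \<forall>z'\<in>B. F z < \<rho> + \<eta> \<longrightarrow> F z' < \<rho> + \<eta> \<longrightarrow> dist z z' < \<epsilon>"
      using close by blast
    have "\<forall>\<^sub>F k in sequentially. F (zs k) < \<rho> + \<eta>" using order_tendstoD(2)[OF Fzs] \<eta> by simp
    then obtain N where "\<forall>k\<ge>N. F (zs k) < \<rho> + \<eta>" unfolding eventually_sequentially by blast
    then show "\<exists>M. \<forall>m\<ge>M. \<forall>n\<ge>M. dist (zs m) (zs n) < \<epsilon>" using H zsB by blast
  qed
  then obtain q where q: "zs \<longlonglongrightarrow> q" using Cauchy_convergent convergent_def by blast
  have qB: "q \<in> B" using closed_sequentially[OF cl zsB q] .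
  have "F q \<le> \<rho>"
  proof (rule tendsto_le[OF trivial_limit_sequentially _ tendsto_const])
    show "(\<lambda>k. F (zs k) + dist q (zs k)) \<longlonglongrightarrow> \<rho>"
      using tendsto_add[OF Fzs tendsto_dist[OF tendsto_const[of q] q]] by simp
    show "\<forall>\<^sub>F k in sequentially. F q \<le> F (zs k) + dist q (zs k)"
      using lip[OF qB zsB] by simp
  qed
  then have Fq: "F q = \<rho>" using low[OF qB] by simp
  have "z = q" if z: "z \<in> B" and Fz: "F z \<le> F q" for z
  proof (rule ccontr)
    assume "z \<noteq> q"
    then obtain \<eta> where "\<eta> > 0"
      and "\<forall>w\<in>B. \<forall>w'\<in>B. F w < \<rho> + \<eta> \<longrightarrow> F w' < \<rho> + \<eta> \<longrightarrow> dist w w' < dist z q"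
      using close[of "dist z q"] by auto
    then have "dist z q < dist z q" using z qB Fz Fq by fastforce
    then show False by simp
  qed
  then show ?thesis using qB Fq low by blast
qed

lemma nearest_point_exists:
  assumes gs: "geodesic_space TYPE('a::complete_space)" and bc: "busemann_convex TYPE('a)"
    and uc: "modulus_uc TYPE('a) \<delta>" and reg: "modulus_monotone \<delta> \<or> modulus_lsc_right \<delta>"
    and "closed B" and "geod_convex B" and "B \<noteq> {}"
  obtains q where "q \<in> B" "\<And>z. z \<in> B \<Longrightarrow> dist q p \<le> dist z (p::'a)"
proof -
  have "\<exists>q\<in>B. (\<forall>z\<in>B. dist q p \<le> dist z p) \<and> (\<forall>z\<in>B. dist z p \<le> dist q p \<longrightarrow> z = q)"
  proof (rule uniformly_convex_on_unique_minimizer[OF gs bc assms(5-7)])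
    show "dist z p \<le> dist z' p + dist z z'" for z z' using dist_triangle[of z p z'] by simp
    show "dist z z' \<le> dist z p + dist z' p" for z z' by (rule dist_triangle2)
  qed (simp_all add: uniformly_convex_on_dist[OF uc reg])
  then show ?thesis using that by blast
qed

text \<open>The limit superior of dist (x n) z, as a real number.\<close>
definition asymptotic_radius :: "(nat \<Rightarrow> 'a::metric_space) \<Rightarrow> 'a \<Rightarrow> real" where
  "asymptotic_radius x z = Inf {s. \<forall>\<^sub>F n in sequentially. dist (x n) z \<le> s}"

lemma eventual_dist_bound_nonneg:
  assumes "\<forall>\<^sub>F n in sequentially. dist (x n) z \<le> s"
  shows "0 \<le> s"
proof -
  obtain N where "\<forall>n\<ge>N. dist (x n) z \<le> s" using assms unfolding eventually_sequentially ..
  then have "dist (x N) z \<le> s" by simp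
  then show ?thesis using zero_le_dist[of "x N" z] by linarith
qed

lemma bdd_below_eventual_dist_bounds:
  "bdd_below {s. \<forall>\<^sub>F n in sequentially. dist (x n) z \<le> s}"
  by (rule bdd_belowI[where m = 0]) (use eventual_dist_bound_nonneg in blast)

lemma asymptotic_radius_le:
  assumes "\<forall>\<^sub>F n in sequentially. dist (x n) z \<le> s"
  shows "asymptotic_radius x z \<le> s"
  using bdd_below_eventual_dist_bounds[of x z] assms unfolding asymptotic_radius_def
  by (auto intro: cInf_lower)

lemma eventually_dist_le_asymptotic_radius:
  assumes bd: "bounded (range x)" and \<eta>: "\<eta> > 0"
  shows "\<forall>\<^sub>F n in sequentially. dist (x n) z \<le> asymptotic_radius x z + \<eta>"
proof -
  let ?S = "{s. \<forall>\<^sub>F n in sequentially. dist (x n) z \<le> s}"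
  obtain e where "\<forall>y\<in>range x. dist z y \<le> e" using bd bounded_any_center by blast
  then have "e \<in> ?S" by (auto simp: dist_commute intro: always_eventually)
  moreover have "bdd_below ?S" by (rule bdd_below_eventual_dist_bounds)
  moreover have "Inf ?S < asymptotic_radius x z + \<eta>" using \<eta> by (simp add: asymptotic_radius_def)
  ultimately obtain s where "s \<in> ?S" "s < asymptotic_radius x z + \<eta>"
    using cInf_less_iff[of ?S] by blast
  then show ?thesis by (auto elim: eventually_mono)
qed

lemma asymptotic_radius_nonneg:
  assumes "bounded (range x)"
  shows "0 \<le> asymptotic_radius x z"
proof (rule field_le_epsilon)
  fix e :: real assume "0 < e"
  show "0 \<le> asymptotic_radius x z + e"
    by (rule eventual_dist_bound_nonneg[OF eventually_dist_le_asymptotic_radius[OF assms \<open>0 < e\<close>]])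
qed

lemma asymptotic_radius_le_add_dist:
  assumes "bounded (range x)"
  shows "asymptotic_radius x z \<le> asymptotic_radius x z' + dist z z'"
proof (rule field_le_epsilon)
  fix \<theta> :: real assume "0 < \<theta>"
  have "\<forall>\<^sub>F n in sequentially. dist (x n) z \<le> asymptotic_radius x z' + dist z z' + \<theta>"
    using eventually_dist_le_asymptotic_radius[OF assms \<open>0 < \<theta>\<close>, of z']
  proof eventually_elim
    case (elim n)
    then show ?case using dist_triangle[of "x n" z z'] by (simp add: dist_commute)
  qed
  then show "asymptotic_radius x z \<le> asymptotic_radius x z' + dist z z' + \<theta>"
    by (rule asymptotic_radius_le)
qed

lemma dist_le_asymptotic_radius_add:
  assumes "bounded (range x)"
  shows "dist z z' \<le> asymptotic_radius x z + asymptotic_radius x z'"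
proof (rule field_le_epsilon)
  fix \<theta> :: real assume "0 < \<theta>"
  then have "\<forall>\<^sub>F n in sequentially. dist (x n) z \<le> asymptotic_radius x z + \<theta>/2
               \<and> dist (x n) z' \<le> asymptotic_radius x z' + \<theta>/2"
    using eventually_dist_le_asymptotic_radius[OF assms] by (simp add: eventually_conj)
  then obtain N where "dist (x N) z \<le> asymptotic_radius x z + \<theta>/2"
      "dist (x N) z' \<le> asymptotic_radius x z' + \<theta>/2"
    unfolding eventually_sequentially by blast
  then show "dist z z' \<le> asymptotic_radius x z + asymptotic_radius x z' + \<theta>"
    using dist_triangle3[of z z' "x N"] by linarith
qed

lemma uniformly_convex_on_asymptotic_radius:
  assumes uc: "modulus_uc TYPE('a::metric_space) \<delta>"
    and reg: "modulus_monotone \<delta> \<or> modulus_lsc_right \<delta>"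
    and bd: "bounded (range (x::nat \<Rightarrow> 'a))"
  shows "uniformly_convex_on S (asymptotic_radius x)"
  unfolding uniformly_convex_on_def
proof (intro allI impI)
  fix r \<epsilon> :: real assume r: "r > 0" and \<epsilon>: "\<epsilon> > 0"
  obtain \<eta> c where \<eta>: "\<eta> > 0" and c: "c > 0"
    and H: "\<And>(a::'a) u v s. r \<le> s \<Longrightarrow> s < r + \<eta> \<Longrightarrow> dist u a \<le> s \<Longrightarrow> dist v a \<le> s
             \<Longrightarrow> \<epsilon> \<le> dist u v \<Longrightarrow> dist (gmid u v) a \<le> s - c"
    using modulus_uc_uniform_decrease[OF uc reg r \<epsilon>] by blast
  define \<theta> where "\<theta> = min (\<eta>/2) (c/2)"
  have \<theta>: "\<theta> > 0" "\<theta> \<le> \<eta>/2" "\<theta> \<le> c/2" using \<eta> c by (auto simp: \<theta>_def)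
  \<comment> \<open>apply the pointwise estimate to the points x n, whose distances to z and z' exceed the
    asymptotic radii by less than \<theta> eventually\<close>
  have "asymptotic_radius x (gmid z z') \<le> s - c/2"
    if s: "r \<le> s" "s < r + \<eta>/2" and Rz: "asymptotic_radius x z \<le> s"
      and Rz': "asymptotic_radius x z' \<le> s" and d: "\<epsilon> \<le> dist z z'" for z z' s
  proof (rule asymptotic_radius_le)
    have "\<forall>\<^sub>F n in sequentially. dist (x n) z \<le> asymptotic_radius x z + \<theta>
            \<and> dist (x n) z' \<le> asymptotic_radius x z' + \<theta>"
      using eventually_dist_le_asymptotic_radius[OF bd \<theta>(1)] by (simp add: eventually_conj)
    then show "\<forall>\<^sub>F n in sequentially. dist (x n) (gmid z z') \<le> s - c/2"
    proof eventually_elim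
      case (elim n)
      have "dist z (x n) \<le> s + \<theta>" "dist z' (x n) \<le> s + \<theta>"
        using elim Rz Rz' by (simp_all add: dist_commute)
      moreover have "r \<le> s + \<theta>" "s + \<theta> < r + \<eta>" using s \<theta> by linarith+
      ultimately have "dist (gmid z z') (x n) \<le> s + \<theta> - c" using H d by blast
      then show ?case using \<theta> by (simp add: dist_commute)
    qed
  qed
  then show "\<exists>\<eta>>0. \<exists>c>0. \<forall>z\<in>S. \<forall>z'\<in>S. \<forall>s. r \<le> s \<longrightarrow> s < r + \<eta> \<longrightarrow>
      asymptotic_radius x z \<le> s \<longrightarrow> asymptotic_radius x z' \<le> s \<longrightarrow> \<epsilon> \<le> dist z z' \<longrightarrow>
      asymptotic_radius x (gmid z z') \<le> s - c"
    using \<eta> c by (intro exI[of _ "\<eta>/2"] conjI exI[of _ "c/2"]) auto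
qed

lemma Lim_transform_dist:
  fixes f g :: "'b \<Rightarrow> 'a::metric_space"
  assumes f: "(f \<longlongrightarrow> a) F" and fg: "((\<lambda>x. dist (f x) (g x)) \<longlongrightarrow> 0) F"
  shows "(g \<longlongrightarrow> a) F"
proof (rule tendsto_dist_iff[THEN iffD2])
  have "((\<lambda>x. dist (f x) (g x) + dist (f x) a) \<longlongrightarrow> 0 + 0) F"
    using tendsto_add[OF fg tendsto_dist_iff[THEN iffD1, OF f]] .
  then have "((\<lambda>x. dist (f x) (g x) + dist (f x) a) \<longlongrightarrow> 0) F" by simp
  then show "((\<lambda>x. dist (g x) a) \<longlongrightarrow> 0) F"
    by (rule tendsto_sandwich[of "\<lambda>_. 0", rotated 3]) (simp_all add: dist_triangle3)
qed

locale midpoint_iteration =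
  fixes A B :: "'a::complete_space set" and T :: "'a \<Rightarrow> 'a"
    and \<delta> :: "real \<Rightarrow> real \<Rightarrow> real" and x :: "nat \<Rightarrow> 'a"
  assumes geodesic: "geodesic_space TYPE('a)"
    and busemann: "busemann_convex TYPE('a)"
    and modulus: "modulus_uc TYPE('a) \<delta>"
    and modulus_regular: "modulus_monotone \<delta> \<or> modulus_lsc_right \<delta>"
    and closed_A: "closed A" and closed_B: "closed B"
    and convex_A: "geod_convex A" and convex_B: "geod_convex B"
    and bounded_B: "bounded B"
    and noncyclic: "noncyclic T A B"
    and nonexpansive: "rel_nonexpansive T A B"
    and x_0: "x 0 \<in> proximal_part A B"
    and x_Suc: "\<And>n. x (Suc n) = gmid (x n) (T (x n))"
begin

lemma T_in_A: "a \<in> A \<Longrightarrow> T a \<in> A"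
  and T_in_B: "b \<in> B \<Longrightarrow> T b \<in> B"
  using noncyclic unfolding noncyclic_def by auto

lemma dist_T_le: "a \<in> A \<Longrightarrow> b \<in> B \<Longrightarrow> dist (T a) (T b) \<le> dist a b"
  using nonexpansive unfolding rel_nonexpansive_def by blast

lemma x_in_A: "x n \<in> A"
proof (induction n)
  case 0
  show ?case using x_0 by (simp add: proximal_part_def)
next
  case (Suc n)
  then show ?case
    using gmid_in_geod_convex[OF geodesic busemann convex_A Suc T_in_A[OF Suc]] by (simp add: x_Suc)
qed

text \<open>The same iteration, started at a partner of x 0 in B, shadows x at distance at most
  dist(A,B).\<close>
lemma proximal_companion:
  obtains y where "\<And>n. y n \<in> B" "\<And>n. dist (x n) (y n) \<le> setdist A B"
proof -
  obtain y0 where y0: "y0 \<in> B" "dist (x 0) y0 = setdist A B"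
    using x_0 unfolding proximal_part_def by blast
  define y where "y n = ((\<lambda>z. gmid z (T z)) ^^ n) y0" for n
  have y_Suc: "y (Suc n) = gmid (y n) (T (y n))" for n by (simp add: y_def)
  have yB: "y n \<in> B" for n
  proof (induction n)
    case 0
    show ?case using y0 by (simp add: y_def)
  next
    case (Suc n)
    then show ?case
      using gmid_in_geod_convex[OF geodesic busemann convex_B Suc T_in_B[OF Suc]] by (simp add: y_Suc)
  qed
  have "dist (x n) (y n) \<le> setdist A B" for n
  proof (induction n)
    case 0
    show ?case using y0 by (simp add: y_def)
  next
    case (Suc n)
    have "dist (x (Suc n)) (y (Suc n)) \<le> (dist (x n) (y n) + dist (T (x n)) (T (y n))) / 2"
      unfolding x_Suc y_Suc by (rule dist_gmid_gmid_le[OF geodesic busemann])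
    also have "\<dots> \<le> dist (x n) (y n)" using dist_T_le[OF x_in_A yB] by simp
    finally show ?case using Suc by simp
  qed
  then show ?thesis using that yB by blast
qed

lemma bounded_x: "bounded (range x)"
proof -
  obtain y where yB: "\<And>n. y n \<in> B" and dxy: "\<And>n. dist (x n) (y n) \<le> setdist A B"
    using proximal_companion by blast
  obtain b e where be: "\<And>z. z \<in> B \<Longrightarrow> dist b z \<le> e"
    using bounded_B unfolding bounded_def by blast
  have "dist b (x n) \<le> e + setdist A B" for n
    using dist_triangle[of b "x n" "y n"] dist_commute[of "y n" "x n"] dxy[of n] be[OF yB[of n]]
    by linarith
  then show ?thesis unfolding bounded_def by blast
qed

lemma dist_x_fixed_point_Suc_le:
  assumes "q \<in> B" and "T q = q"
  shows "dist (x (Suc n)) q \<le> dist (x n) q"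
proof -
  have "dist (x (Suc n)) q \<le> (dist (x n) q + dist (T (x n)) q) / 2"
    unfolding x_Suc by (rule dist_gmid_le[OF geodesic busemann])
  moreover have "dist (T (x n)) q \<le> dist (x n) q" using dist_T_le[OF x_in_A assms(1)] assms(2) by simp
  ultimately show ?thesis by simp
qed

lemma dist_x_fixed_point_convergent:
  assumes "q \<in> B" and "T q = q"
  obtains L where "(\<lambda>n. dist (x n) q) \<longlonglongrightarrow> L" "\<And>n. L \<le> dist (x n) q"
proof -
  have "decseq (\<lambda>n. dist (x n) q)"
    by (rule decseq_SucI) (rule dist_x_fixed_point_Suc_le[OF assms])
  then show ?thesis using that decseq_convergent[of "\<lambda>n. dist (x n) q" 0] by auto
qed

text \<open>The fixed point is the asymptotic centre q of x in B: as x (Suc n) is the midpoint of x n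
  and T (x n), and T (x n) is as close to T q as x n is to q, the asymptotic radius at T q is at
  most the mean of those at T q and q.\<close>
lemma fixed_point_in_B:
  obtains q where "q \<in> B" "T q = q"
proof -
  let ?R = "asymptotic_radius x"
  have "B \<noteq> {}" using x_0 unfolding proximal_part_def by blast
  obtain q where qB: "q \<in> B" and q_unique: "\<And>z. z \<in> B \<Longrightarrow> ?R z \<le> ?R q \<Longrightarrow> z = q"
    using uniformly_convex_on_unique_minimizer[OF geodesic busemann closed_B convex_B \<open>B \<noteq> {}\<close>
        asymptotic_radius_nonneg[OF bounded_x] asymptotic_radius_le_add_dist[OF bounded_x]
        dist_le_asymptotic_radius_add[OF bounded_x]
        uniformly_convex_on_asymptotic_radius[OF modulus modulus_regular bounded_x]]
    by blast
  have "?R (T q) \<le> ?R q"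
  proof (rule field_le_epsilon)
    fix \<theta> :: real assume "0 < \<theta>"
    then have "\<forall>\<^sub>F n in sequentially. dist (x n) (T q) \<le> ?R (T q) + \<theta>/2 \<and> dist (x n) q \<le> ?R q + \<theta>/2"
      using eventually_dist_le_asymptotic_radius[OF bounded_x] by (simp add: eventually_conj)
    then have "\<forall>\<^sub>F n in sequentially. dist (x (Suc n)) (T q) \<le> (?R (T q) + ?R q + \<theta>) / 2"
    proof eventually_elim
      case (elim n)
      have "dist (x (Suc n)) (T q) \<le> (dist (x n) (T q) + dist (T (x n)) (T q)) / 2"
        unfolding x_Suc by (rule dist_gmid_le[OF geodesic busemann])
      then show ?case using elim dist_T_le[OF x_in_A qB, of n] by simp
    qed
    then have "\<forall>\<^sub>F n in sequentially. dist (x n) (T q) \<le> (?R (T q) + ?R q + \<theta>) / 2"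
      by (rule eventually_sequentially_Suc[THEN iffD1])
    then have "?R (T q) \<le> (?R (T q) + ?R q + \<theta>) / 2" by (rule asymptotic_radius_le)
    then show "?R (T q) \<le> ?R q + \<theta>" by simp
  qed
  then show ?thesis using that q_unique T_in_B qB by blast
qed

lemma dist_x_T_x_tendsto_0: "(\<lambda>n. dist (x n) (T (x n))) \<longlonglongrightarrow> 0"
proof -
  obtain q where qB: "q \<in> B" and Tq: "T q = q" using fixed_point_in_B by blast
  obtain L where L: "(\<lambda>n. dist (x n) q) \<longlonglongrightarrow> L" "\<And>n. L \<le> dist (x n) q"
    using dist_x_fixed_point_convergent[OF qB Tq] by blast
  show ?thesis
  proof (rule modulus_uc_dist_tendsto_0[OF modulus modulus_regular L])
    show "dist (T (x n)) q \<le> dist (x n) q" for n using dist_T_le[OF x_in_A qB, of n] Tq by simp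
    show "(\<lambda>n. dist (gmid (x n) (T (x n))) q) \<longlonglongrightarrow> L"
      using LIMSEQ_Suc[OF L(1)] by (simp add: x_Suc)
  qed simp
qed


lemma subseq_limit_proximal_fixed_point:
  assumes l: "strict_mono l" and lim: "(x \<circ> l) \<longlonglongrightarrow> p"
  obtains q where "q \<in> B" "T q = q" "dist p q = setdist A B"
proof -
  have pA: "p \<in> A" using closed_sequentially[OF closed_A _ lim] x_in_A by simp
  have "B \<noteq> {}" using x_0 unfolding proximal_part_def by blast
  obtain q where qB: "q \<in> B" and q_nearest: "\<And>z. z \<in> B \<Longrightarrow> dist q p \<le> dist z p"
    using nearest_point_exists[OF geodesic busemann modulus modulus_regular closed_B convex_B
        \<open>B \<noteq> {}\<close>] by blast
  obtain y where yB: "\<And>n. y n \<in> B" and dxy: "\<And>n. dist (x n) (y n) \<le> setdist A B"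
    using proximal_companion by blast
  have "dist q p \<le> setdist A B"
  proof (rule tendsto_le[OF trivial_limit_sequentially _ tendsto_const])
    show "(\<lambda>k. setdist A B + dist (x (l k)) p) \<longlonglongrightarrow> setdist A B"
      using tendsto_add[OF tendsto_const tendsto_dist_iff[THEN iffD1, OF lim]] by (simp add: o_def)
    show "\<forall>\<^sub>F k in sequentially. dist q p \<le> setdist A B + dist (x (l k)) p"
    proof (intro always_eventually allI)
      fix k
      have "dist q p \<le> dist (y (l k)) p" by (rule q_nearest[OF yB])
      also have "\<dots> \<le> dist (x (l k)) (y (l k)) + dist (x (l k)) p" by (rule dist_triangle3)
      also have "\<dots> \<le> setdist A B + dist (x (l k)) p" using dxy by simp
      finally show "dist q p \<le> setdist A B + dist (x (l k)) p" .
    qed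
  qed
  then have dpq: "dist p q = setdist A B"
    using setdist_le_dist[OF pA qB] by (simp add: dist_commute)
  have Txl: "(\<lambda>k. T (x (l k))) \<longlonglongrightarrow> p"
    using Lim_transform_dist[OF lim] LIMSEQ_subseq_LIMSEQ[OF dist_x_T_x_tendsto_0 l]
    by (simp add: o_def)
  have "dist p (T q) \<le> dist p q"
  proof (rule tendsto_le[OF trivial_limit_sequentially])
    show "(\<lambda>k. dist (T (x (l k))) (T q)) \<longlonglongrightarrow> dist p (T q)" by (intro tendsto_intros Txl)
    show "(\<lambda>k. dist (x (l k)) q) \<longlonglongrightarrow> dist p q"
      using tendsto_dist[OF lim tendsto_const[of q]] by (simp add: o_def)
    show "\<forall>\<^sub>F k in sequentially. dist (T (x (l k))) (T q) \<le> dist (x (l k)) q"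
      using dist_T_le[OF x_in_A qB] by simp
  qed
  moreover have "\<forall>w\<in>B. setdist A B \<le> dist w p"
    using setdist_le_dist[OF pA] by (simp add: dist_commute)
  ultimately have "T q = q"
    using geod_convex_nearest_unique[OF geodesic busemann modulus convex_B T_in_B[OF qB] qB,
        of "setdist A B" p] dpq
    by (simp add: dist_commute)
  then show ?thesis using that qB dpq by blast
qed

text \<open>Both x n and p lie in A, at distance at least dist(A,B) from the fixed point q, while
  dist (x n) q decreases to dist(A,B) = dist p q; uniform convexity forces them together.\<close>
lemma convergent_if_subseq_convergent:
  assumes l: "strict_mono l" and lim: "(x \<circ> l) \<longlonglongrightarrow> p"
  shows "x \<longlonglongrightarrow> p"
proof -
  have pA: "p \<in> A" using closed_sequentially[OF closed_A _ lim] x_in_A by simp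
  obtain q where qB: "q \<in> B" and Tq: "T q = q" and dpq: "dist p q = setdist A B"
    using subseq_limit_proximal_fixed_point[OF l lim] by blast
  obtain L where L: "(\<lambda>n. dist (x n) q) \<longlonglongrightarrow> L"
    using dist_x_fixed_point_convergent[OF qB Tq] by blast
  have "(\<lambda>k. dist (x (l k)) q) \<longlonglongrightarrow> setdist A B"
    using tendsto_dist[OF lim tendsto_const[of q]] dpq by (simp add: o_def)
  then have L_eq: "L = setdist A B"
    using LIMSEQ_unique LIMSEQ_subseq_LIMSEQ[OF L l] by (auto simp: o_def)
  have "(\<lambda>n. dist (x n) p) \<longlonglongrightarrow> 0"
  proof (rule modulus_uc_dist_tendsto_0[OF modulus modulus_regular L[unfolded L_eq]])
    show "setdist A B \<le> dist (x n) q" for n by (rule setdist_le_dist[OF x_in_A qB])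
    then show "dist p q \<le> dist (x n) q" for n using dpq by simp
    show "(\<lambda>n. dist (gmid (x n) p) q) \<longlonglongrightarrow> setdist A B"
    proof (rule tendsto_sandwich[of "\<lambda>_. setdist A B" _ _ "\<lambda>n. (dist (x n) q + dist p q) / 2"])
      show "\<forall>\<^sub>F n in sequentially. setdist A B \<le> dist (gmid (x n) p) q"
        using setdist_le_dist[OF gmid_in_geod_convex[OF geodesic busemann convex_A x_in_A pA] qB]
        by simp
      show "\<forall>\<^sub>F n in sequentially. dist (gmid (x n) p) q \<le> (dist (x n) q + dist p q) / 2"
        using dist_gmid_le[OF geodesic busemann] by simp
      show "(\<lambda>n. (dist (x n) q + dist p q) / 2) \<longlonglongrightarrow> setdist A B"
        using tendsto_divide[OF tendsto_add[OF L[unfolded L_eq] tendsto_const[of "dist p q"]]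
            tendsto_const[of 2]] dpq by simp
    qed simp
  qed simp
  then show ?thesis by (rule tendsto_dist_iff[THEN iffD2])
qed

lemma convergent_to_fixed_point:
  assumes "compact C" and "T ` A \<subseteq> C"
  obtains p where "p \<in> A" "T p = p" "x \<longlonglongrightarrow> p"
proof -
  have "\<forall>n. T (x n) \<in> C" using assms(2) x_in_A by blast
  then obtain p l where "p \<in> C" and l: "strict_mono l" and Txl: "((\<lambda>n. T (x n)) \<circ> l) \<longlonglongrightarrow> p"
    by (rule seq_compactE[OF compact_imp_seq_compact[OF assms(1)]])
  have "(x \<circ> l) \<longlonglongrightarrow> p"
    using Lim_transform_dist[OF Txl] LIMSEQ_subseq_LIMSEQ[OF dist_x_T_x_tendsto_0 l]
    by (simp add: o_def dist_commute)
  then have "x \<longlonglongrightarrow> p" by (rule convergent_if_subseq_convergent[OF l])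
  have pA: "p \<in> A" using closed_sequentially[OF closed_A _ \<open>x \<longlonglongrightarrow> p\<close>] x_in_A by simp
  obtain q where qB: "q \<in> B" and Tq: "T q = q" and dpq: "dist p q = setdist A B"
    using subseq_limit_proximal_fixed_point[OF l \<open>(x \<circ> l) \<longlonglongrightarrow> p\<close>] by blast
  \<comment> \<open>T p is, like p, a point of A nearest to q\<close>
  have "dist (T p) q \<le> setdist A B" using dist_T_le[OF pA qB] Tq dpq by simp
  moreover have "\<forall>w\<in>A. setdist A B \<le> dist w q" using setdist_le_dist[OF _ qB] by blast
  ultimately have "T p = p"
    using geod_convex_nearest_unique[OF geodesic busemann modulus convex_A T_in_A[OF pA] pA] dpq
    by simp
  then show ?thesis using that pA \<open>x \<longlonglongrightarrow> p\<close> by blast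
qed

end

theorem mainTheorem7:
  fixes A B :: "'a::complete_space set"
    and T :: "'a \<Rightarrow> 'a"
    and \<delta> :: "real \<Rightarrow> real \<Rightarrow> real"
    and x :: "nat \<Rightarrow> 'a"
  assumes "geodesic_space TYPE('a)"
    and "busemann_convex TYPE('a)"
    and "modulus_uc TYPE('a) \<delta>"
    and "modulus_monotone \<delta> \<or> modulus_lsc_right \<delta>"
    and "closed A" and "closed B" and "geod_convex A" and "geod_convex B"
    and "bounded B"
    and "T ` (A \<union> B) \<subseteq> A \<union> B"
    and "noncyclic T A B" and "rel_nonexpansive T A B"
    and "x 0 \<in> proximal_part A B"
    and "\<And>n. x (Suc n) = gmid (x n) (T (x n))"
  shows "(\<lambda>n. dist (x n) (T (x n))) \<longlonglongrightarrow> 0 \<and>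
         (\<forall>C. compact C \<and> T ` A \<subseteq> C \<longrightarrow>
            (\<exists>p. p \<in> A \<union> B \<and> T p = p \<and> x \<longlonglongrightarrow> p))"
proof -
  \<comment> \<open>the hypothesis T ` (A \<union> B) \<subseteq> A \<union> B is implied by noncyclicity\<close>
  interpret midpoint_iteration A B T \<delta> x
    using assms(1-9,11-14) by unfold_locales
  have "\<exists>p. p \<in> A \<union> B \<and> T p = p \<and> x \<longlonglongrightarrow> p" if "compact C" "T ` A \<subseteq> C" for C
    using convergent_to_fixed_point[OF that] by blast
  then show ?thesis using dist_x_T_x_tendsto_0 by blast
qed

end
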